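(* For the imprecise branching strategy applied with the naive credal classifier, the global time complexity of inferring the (partial) prediction of all $m$ labels of an instance is $\mathcal{O}(m^2)$ in the worst case and $\mathcal{O}(m)$ in the best case.
   Context: Multi-label setting with $m$ binary labels $Y_1,\dots,Y_m$ inferred in a chain. For each $j$, with earlier predictions partitioned into relevant indices $\mathscr{I}_{\mathcal{R}}^{j-1}$ (predicted 1), irrelevant $\mathscr{I}_{\mathcal{I}}^{j-1}$ (predicted 0) and abstained $\mathscr{I}_{\mathcal{A}}^{j-1}$, the imprecise branching strategy computes $\underline{P}(Y_j=1)=\min_{\mathbf{y}}\underline{P}(Y_j=1\mid \mathbf{X}=\mathbf{x},Y_{\mathscr{I}_{\mathcal{R}}^{j-1}}=1,Y_{\mathscr{I}_{\mathcal{I}}^{j-1}}=0,Y_{\mathscr{I}_{\mathcal{A}}^{j-1}}=\mathbf{y})$ and $\overline{P}(Y_j=1)$ the corresponding maximum of upper probabilities, over $\mathbf{y}\in\{0,1\}^{|\mathscr{I}_{\mathcal{A}}^{j-1}|}$, and predicts $\hat y_j=1$ if $\underline{P}(Y_j=1)>0.5$, $\hat y_j=0$ if $\overline{P}(Y_j=1)<0.5$, and $\hat y_j=*$ (abstain) otherwise. The conditional probability bounds are those of the naive credal classifier for $Y_j$: features and previous labels are treated as conditionally independent given $Y_j$, $P(Y_j)$ is precise, and each conditional $P(Z=z\mid Y_j=a)$ ranges in $\big[\frac{n(z\mid a)}{n(a)+s},\frac{n(z\mid a)+s}{n(a)+s}\big]$ (imprecise Dirichlet model, counts $n$ from training data,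 hyper-parameter $s>0$); the resulting lower (upper) bound of $P(Y_j=1\mid\cdot)$ is $\big(1+\frac{P(Y_j=0)\,U_0}{P(Y_j=1)\,L_1}\big)^{-1}$ (resp. with $L_0,U_1$), where $U_a$ ($L_a$) is the product over all attributes of the upper (lower) conditional probabilities given $Y_j=a$. *)

theory Defs
  imports Complex_Main
begin

text \<open>A naive credal classifier (NCC) chain for one fixed instance x.
  Labels are indexed 0..m-1; the NCC for label j uses the d observed
  feature values of x and the previous labels k < j as attributes.
  Booleans encode label values (True = 1, False = 0).\<close>

record ncc =
  prior1 :: "nat \<Rightarrow> real"                           \<comment> \<open>precise P(Y_j = 1); P(Y_j = 0) = 1 - prior1 j\<close>
  nlab   :: "nat \<Rightarrow> bool \<Rightarrow> nat"                  \<comment> \<open>n(Y_j = a)\<close>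
  nfeat  :: "nat \<Rightarrow> nat \<Rightarrow> bool \<Rightarrow> nat"           \<comment> \<open>n(X_i = x_i | Y_j = a), j i a\<close>
  nprev  :: "nat \<Rightarrow> nat \<Rightarrow> bool \<Rightarrow> bool \<Rightarrow> nat"   \<comment> \<open>n(Y_k = v | Y_j = a), j k v a\<close>
  nfeats :: nat
  shyp   :: real

definition idm_low :: "nat \<Rightarrow> nat \<Rightarrow> real \<Rightarrow> real" where
  "idm_low n na s = real n / (real na + s)"

definition idm_up :: "nat \<Rightarrow> nat \<Rightarrow> real \<Rightarrow> real" where
  "idm_up n na s = (real n + s) / (real na + s)"

text \<open>L_a and U_a for label j, given a full assignment y of the previous labels
  (length y = j).\<close>
definition Lprod :: "ncc \<Rightarrow> nat \<Rightarrow> bool \<Rightarrow> bool list \<Rightarrow> real" where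
  "Lprod M j a y =
     (\<Prod>i<nfeats M. idm_low (nfeat M j i a) (nlab M j a) (shyp M)) *
     (\<Prod>k<length y. idm_low (nprev M j k (y ! k) a) (nlab M j a) (shyp M))"

definition Uprod :: "ncc \<Rightarrow> nat \<Rightarrow> bool \<Rightarrow> bool list \<Rightarrow> real" where
  "Uprod M j a y =
     (\<Prod>i<nfeats M. idm_up (nfeat M j i a) (nlab M j a) (shyp M)) *
     (\<Prod>k<length y. idm_up (nprev M j k (y ! k) a) (nlab M j a) (shyp M))"

text \<open>(1 + P0 U0/(P1 L1))^-1, written as P1 L1 / (P1 L1 + P0 U0) (same value when
  L1 > 0, and the correct value 0 when L1 = 0).\<close>
definition low_prob :: "ncc \<Rightarrow> nat \<Rightarrow> bool list \<Rightarrow> real" where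
  "low_prob M j y =
     prior1 M j * Lprod M j True y /
     (prior1 M j * Lprod M j True y + (1 - prior1 M j) * Uprod M j False y)"

definition up_prob :: "ncc \<Rightarrow> nat \<Rightarrow> bool list \<Rightarrow> real" where
  "up_prob M j y =
     prior1 M j * Uprod M j True y /
     (prior1 M j * Uprod M j True y + (1 - prior1 M j) * Lprod M j False y)"

text \<open>Earlier predictions: Some True (relevant), Some False (irrelevant), None (abstained).
  Completions: all assignments agreeing with the determinate predictions.\<close>
definition completions :: "bool option list \<Rightarrow> bool list set" where
  "completions h = {y. length y = length h \<and>
                       (\<forall>k<length h. \<forall>v. h ! k = Some v \<longrightarrow> y ! k = v)}"

definition lower_bound :: "ncc \<Rightarrow> bool option list \<Rightarrow> real" where
  "lower_bound M h = Min (low_prob M (length h) ` completions h)"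

definition upper_bound :: "ncc \<Rightarrow> bool option list \<Rightarrow> real" where
  "upper_bound M h = Max (up_prob M (length h) ` completions h)"

definition decide :: "real \<Rightarrow> real \<Rightarrow> bool option" where
  "decide lo up = (if lo > 1/2 then Some True else if up < 1/2 then Some False else None)"

text \<open>Specification: the imprecise branching strategy (predictions of labels 0..m-1).\<close>
fun ib_preds :: "ncc \<Rightarrow> nat \<Rightarrow> bool option list" where
  "ib_preds M 0 = []"
| "ib_preds M (Suc j) =
     (let h = ib_preds M j in h @ [decide (lower_bound M h) (upper_bound M h)])"

text \<open>Efficient algorithm for the NCC: each abstained previous label is optimised
  independently by one comparison (for the lower bound and one for the upper bound).\<close>
definition pick_low :: "ncc \<Rightarrow> nat \<Rightarrow> nat \<Rightarrow> bool" where
  "pick_low M j k = (let s = shyp M;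
      u0 = (\<lambda>v. idm_up (nprev M j k v False) (nlab M j False) s);
      l1 = (\<lambda>v. idm_low (nprev M j k v True) (nlab M j True) s)
    in \<not> (u0 False * l1 True \<ge> u0 True * l1 False))"

definition pick_up :: "ncc \<Rightarrow> nat \<Rightarrow> nat \<Rightarrow> bool" where
  "pick_up M j k = (let s = shyp M;
      u1 = (\<lambda>v. idm_up (nprev M j k v True) (nlab M j True) s);
      l0 = (\<lambda>v. idm_low (nprev M j k v False) (nlab M j False) s)
    in \<not> (u1 False * l0 True \<ge> u1 True * l0 False))"

definition fill :: "(nat \<Rightarrow> bool) \<Rightarrow> bool option list \<Rightarrow> bool list" where
  "fill pick h = map (\<lambda>k. case h ! k of Some v \<Rightarrow> v | None \<Rightarrow> pick k) [0..<length h]"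

text \<open>One step: prediction and its cost (2 bound evaluations plus 2 comparisons per
  abstained earlier label).\<close>
definition fast_step :: "ncc \<Rightarrow> bool option list \<Rightarrow> bool option \<times> nat" where
  "fast_step M h =
     (let j = length h in
      (decide (low_prob M j (fill (pick_low M j) h)) (up_prob M j (fill (pick_up M j) h)),
       2 + 2 * length (filter (\<lambda>q. q = None) h)))"

fun ib_fast :: "ncc \<Rightarrow> nat \<Rightarrow> bool option list \<times> nat" where
  "ib_fast M 0 = ([], 0)"
| "ib_fast M (Suc j) =
     (let (h, c) = ib_fast M j; (p, c') = fast_step M h in (h @ [p], c + c'))"

end

(* The NCC lower bound P1 L1 / (P1 L1 + P0 U0) is increasing in the odds L1 / U0 (the upper
   bound likewise in U1 / L0), and these odds factorise over the earlier labels. So the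
   optimisation over all completions of the abstained labels decouples: each abstained label
   is set independently by one cross-multiplied comparison. Step j therefore costs
   2 + 2 a_j, where a_j <= j counts the abstentions so far, and m steps cost at most
   2m(1 + a) with a <= m the final number of abstentions: O(m^2), and O(m) when a = 0. *)

theory Submission
  imports Defs
begin

(* Without the last hypothesis, x' = y' = 0 would make the right-hand side the junk value 0. *)
lemma divide_add_le_divide_add:
  fixes x y x' y' :: real
  assumes "0 \<le> x" "0 \<le> y" "0 \<le> x'" "0 \<le> y'"
    and cross: "x * y' \<le> x' * y"
    and nondegenerate: "x > 0 \<Longrightarrow> x' + y' > 0"
  shows "x / (x + y) \<le> x' / (x' + y')"
proof (cases "x = 0 \<or> x + y = 0")
  case True
  then show ?thesis using assms by auto
next
  case False
  then have "x + y > 0" "x' + y' > 0" using assms by auto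
  moreover have "x * (x' + y') \<le> x' * (x + y)" using cross by (simp add: algebra_simps)
  ultimately show ?thesis by (simp add: divide_simps mult.commute)
qed

definition feat_low :: "ncc \<Rightarrow> nat \<Rightarrow> bool \<Rightarrow> real" where
  "feat_low M j a = (\<Prod>i<nfeats M. idm_low (nfeat M j i a) (nlab M j a) (shyp M))"

definition feat_up :: "ncc \<Rightarrow> nat \<Rightarrow> bool \<Rightarrow> real" where
  "feat_up M j a = (\<Prod>i<nfeats M. idm_up (nfeat M j i a) (nlab M j a) (shyp M))"

definition prev_low :: "ncc \<Rightarrow> nat \<Rightarrow> bool \<Rightarrow> nat \<Rightarrow> bool \<Rightarrow> real" where
  "prev_low M j a k v = idm_low (nprev M j k v a) (nlab M j a) (shyp M)"

definition prev_up :: "ncc \<Rightarrow> nat \<Rightarrow> bool \<Rightarrow> nat \<Rightarrow> bool \<Rightarrow> real" where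
  "prev_up M j a k v = idm_up (nprev M j k v a) (nlab M j a) (shyp M)"

lemma Lprod_eq: "Lprod M j a y = feat_low M j a * (\<Prod>k<length y. prev_low M j a k (y ! k))"
  by (simp add: Lprod_def feat_low_def prev_low_def)

lemma Uprod_eq: "Uprod M j a y = feat_up M j a * (\<Prod>k<length y. prev_up M j a k (y ! k))"
  by (simp add: Uprod_def feat_up_def prev_up_def)

lemma prev_low_nonneg: "shyp M > 0 \<Longrightarrow> 0 \<le> prev_low M j a k v"
  by (simp add: prev_low_def idm_low_def)

lemma prev_up_pos: "shyp M > 0 \<Longrightarrow> 0 < prev_up M j a k v"
  by (simp add: prev_up_def idm_up_def add_nonneg_pos)

lemma Lprod_nonneg: "shyp M > 0 \<Longrightarrow> 0 \<le> Lprod M j a y"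
  by (simp add: Lprod_def idm_low_def prod_nonneg)

lemma Uprod_pos: "shyp M > 0 \<Longrightarrow> 0 < Uprod M j a y"
  by (simp add: Uprod_def idm_up_def prod_pos add_nonneg_pos)

lemma low_prob_le_low_prob:
  assumes s: "shyp M > 0" and p: "0 \<le> prior1 M j" "prior1 M j \<le> 1"
    and cross: "Lprod M j True z * Uprod M j False y \<le> Lprod M j True y * Uprod M j False z"
  shows "low_prob M j z \<le> low_prob M j y"
  unfolding low_prob_def
proof (rule divide_add_le_divide_add)
  show "prior1 M j * Lprod M j True z * ((1 - prior1 M j) * Uprod M j False y)
      \<le> prior1 M j * Lprod M j True y * ((1 - prior1 M j) * Uprod M j False z)"
    using mult_left_mono[OF cross, of "prior1 M j * (1 - prior1 M j)"] p by (simp add: mult_ac)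
  assume "prior1 M j * Lprod M j True z > 0"
  then have "prior1 M j > 0" "Lprod M j True z > 0"
    using p Lprod_nonneg[OF s] by (auto simp: zero_less_mult_iff)
  moreover have "Lprod M j True y > 0"
    using cross \<open>Lprod M j True z > 0\<close> Uprod_pos[OF s] Lprod_nonneg[OF s]
    by (smt (verit) mult_pos_pos mult_nonpos_nonneg)
  ultimately show "prior1 M j * Lprod M j True y + (1 - prior1 M j) * Uprod M j False y > 0"
    using p Uprod_pos[OF s] by (smt (verit) mult_pos_pos mult_nonneg_nonneg)
qed (use p Lprod_nonneg[OF s] less_imp_le[OF Uprod_pos[OF s]] in \<open>simp_all\<close>)

lemma up_prob_le_up_prob:
  assumes s: "shyp M > 0" and p: "0 \<le> prior1 M j" "prior1 M j \<le> 1"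
    and cross: "Lprod M j False z * Uprod M j True y \<le> Lprod M j False y * Uprod M j True z"
  shows "up_prob M j y \<le> up_prob M j z"
  unfolding up_prob_def
proof (rule divide_add_le_divide_add)
  show "prior1 M j * Uprod M j True y * ((1 - prior1 M j) * Lprod M j False z)
      \<le> prior1 M j * Uprod M j True z * ((1 - prior1 M j) * Lprod M j False y)"
    using mult_left_mono[OF cross, of "prior1 M j * (1 - prior1 M j)"] p by (simp add: mult_ac)
  assume "prior1 M j * Uprod M j True y > 0"
  then have "prior1 M j > 0" using p Uprod_pos[OF s] by (auto simp: zero_less_mult_iff)
  then show "prior1 M j * Uprod M j True z + (1 - prior1 M j) * Lprod M j False z > 0"
    using p Uprod_pos[OF s] Lprod_nonneg[OF s] by (smt (verit) mult_pos_pos mult_nonneg_nonneg)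
qed (use p Lprod_nonneg[OF s] less_imp_le[OF Uprod_pos[OF s]] in \<open>simp_all\<close>)

lemma length_fill [simp]: "length (fill p h) = length h"
  by (simp add: fill_def)

lemma nth_fill: "k < length h \<Longrightarrow> fill p h ! k = (case h ! k of Some v \<Rightarrow> v | None \<Rightarrow> p k)"
  by (simp add: fill_def split: option.split)

lemma fill_in_completions: "fill p h \<in> completions h"
  by (auto simp: completions_def nth_fill)

lemma finite_completions: "finite (completions h)"
  by (rule finite_subset[OF _ finite_lists_length_eq[OF finite_UNIV]]) (auto simp: completions_def)

lemma prod_fill_cross_le:
  fixes l u :: "nat \<Rightarrow> bool \<Rightarrow> real"
  assumes y: "y \<in> completions h"
    and nonneg: "\<And>k v. 0 \<le> l k v" "\<And>k v. 0 \<le> u k v"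
    and pick: "\<And>k v. k < length h \<Longrightarrow> h ! k = None \<Longrightarrow> l k (p k) * u k v \<le> l k v * u k (p k)"
  shows "(\<Prod>k<length h. l k (fill p h ! k)) * (\<Prod>k<length h. u k (y ! k))
         \<le> (\<Prod>k<length h. l k (y ! k)) * (\<Prod>k<length h. u k (fill p h ! k))"
proof -
  have "l k (fill p h ! k) * u k (y ! k) \<le> l k (y ! k) * u k (fill p h ! k)" if "k < length h" for k
  proof (cases "h ! k")
    case None
    then show ?thesis using that pick by (simp add: nth_fill)
  next
    case (Some v)
    then have "y ! k = v" using y that by (auto simp: completions_def)
    then show ?thesis using Some that by (simp add: nth_fill mult.commute)
  qed
  then have "(\<Prod>k<length h. l k (fill p h ! k) * u k (y ! k))
           \<le> (\<Prod>k<length h. l k (y ! k) * u k (fill p h ! k))"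
    by (intro prod_mono) (simp add: nonneg)
  then show ?thesis by (simp add: prod.distrib)
qed

lemma Lprod_Uprod_fill_le:
  assumes s: "shyp M > 0" and y: "y \<in> completions h"
    and pick: "\<And>k v. prev_low M j a k (p k) * prev_up M j b k v \<le> prev_low M j a k v * prev_up M j b k (p k)"
  shows "Lprod M j a (fill p h) * Uprod M j b y \<le> Lprod M j a y * Uprod M j b (fill p h)"
proof -
  have "(\<Prod>k<length h. prev_low M j a k (fill p h ! k)) * (\<Prod>k<length h. prev_up M j b k (y ! k))
      \<le> (\<Prod>k<length h. prev_low M j a k (y ! k)) * (\<Prod>k<length h. prev_up M j b k (fill p h ! k))"
    by (rule prod_fill_cross_le[OF y])
      (simp_all add: prev_low_nonneg[OF s] less_imp_le[OF prev_up_pos[OF s]] pick)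
  moreover have "length y = length h" using y by (simp add: completions_def)
  moreover have "0 \<le> feat_low M j a * feat_up M j b"
    using s by (simp add: feat_low_def feat_up_def idm_low_def idm_up_def prod_nonneg)
  ultimately show ?thesis
    using mult_left_mono by (fastforce simp: Lprod_eq Uprod_eq mult_ac)
qed

lemma cross_choice_le:
  fixes l u :: "bool \<Rightarrow> real"
  defines "b \<equiv> \<not> (u False * l True \<ge> u True * l False)"
  shows "l b * u v \<le> l v * u b"
  unfolding b_def by (cases v; cases "u False * l True \<ge> u True * l False") (auto simp: mult.commute)

lemma pick_low_cross_le:
  "prev_low M j True k (pick_low M j k) * prev_up M j False k v
     \<le> prev_low M j True k v * prev_up M j False k (pick_low M j k)"
proof -
  have "pick_low M j k = (\<not> (prev_up M j False k False * prev_low M j True k True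
                               \<ge> prev_up M j False k True * prev_low M j True k False))"
    by (simp add: pick_low_def prev_low_def prev_up_def Let_def)
  then show ?thesis by (simp only: cross_choice_le)
qed

lemma pick_up_cross_le:
  "prev_low M j False k (pick_up M j k) * prev_up M j True k v
     \<le> prev_low M j False k v * prev_up M j True k (pick_up M j k)"
proof -
  have "pick_up M j k = (\<not> (prev_up M j True k False * prev_low M j False k True
                               \<ge> prev_up M j True k True * prev_low M j False k False))"
    by (simp add: pick_up_def prev_low_def prev_up_def Let_def)
  then show ?thesis by (simp only: cross_choice_le)
qed

lemma lower_bound_eq_fill:
  assumes s: "shyp M > 0" and p: "0 \<le> prior1 M (length h)" "prior1 M (length h) \<le> 1"
  shows "lower_bound M h = low_prob M (length h) (fill (pick_low M (length h)) h)"
  unfolding lower_bound_def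
proof (rule Min_eqI)
  fix q assume "q \<in> low_prob M (length h) ` completions h"
  then obtain y where "y \<in> completions h" "q = low_prob M (length h) y" by blast
  then show "low_prob M (length h) (fill (pick_low M (length h)) h) \<le> q"
    using low_prob_le_low_prob[OF s p Lprod_Uprod_fill_le[OF s _ pick_low_cross_le]] by simp
qed (simp_all add: finite_completions fill_in_completions)

lemma upper_bound_eq_fill:
  assumes s: "shyp M > 0" and p: "0 \<le> prior1 M (length h)" "prior1 M (length h) \<le> 1"
  shows "upper_bound M h = up_prob M (length h) (fill (pick_up M (length h)) h)"
  unfolding upper_bound_def
proof (rule Max_eqI)
  fix q assume "q \<in> up_prob M (length h) ` completions h"
  then obtain y where "y \<in> completions h" "q = up_prob M (length h) y" by blast
  then show "q \<le> up_prob M (length h) (fill (pick_up M (length h)) h)"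
    using up_prob_le_up_prob[OF s p Lprod_Uprod_fill_le[OF s _ pick_up_cross_le]] by simp
qed (simp_all add: finite_completions fill_in_completions)

lemma length_filter_None: "length (filter (\<lambda>q. q = None) h) = count_list h None"
  by (induction h) auto

lemma fst_fast_step:
  assumes "shyp M > 0" "0 \<le> prior1 M (length h)" "prior1 M (length h) \<le> 1"
  shows "fst (fast_step M h) = decide (lower_bound M h) (upper_bound M h)"
  using assms by (simp add: fast_step_def lower_bound_eq_fill upper_bound_eq_fill Let_def)

lemma snd_fast_step: "snd (fast_step M h) = 2 + 2 * count_list h None"
  by (simp add: fast_step_def length_filter_None Let_def)

lemma ib_fast_Suc:
  "ib_fast M (Suc m) =
     (let h = fst (ib_fast M m) in (h @ [fst (fast_step M h)], snd (ib_fast M m) + snd (fast_step M h)))"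
  by (simp add: case_prod_beta Let_def)

declare ib_fast.simps(2) [simp del]

lemma length_fst_ib_fast: "length (fst (ib_fast M m)) = m"
  by (induction m) (simp_all add: ib_fast_Suc Let_def)

lemma fst_ib_fast_eq_ib_preds:
  assumes "shyp M > 0" "\<forall>j. 0 \<le> prior1 M j \<and> prior1 M j \<le> 1"
  shows "fst (ib_fast M m) = ib_preds M m"
proof (induction m)
  case (Suc m)
  then show ?case using assms by (simp add: ib_fast_Suc fst_fast_step Let_def)
qed simp

lemma snd_ib_fast_le:
  "snd (ib_fast M m) \<le> 2 * m * (1 + count_list (fst (ib_fast M m)) None)"
proof (induction m)
  case (Suc m)
  define n where "n = count_list (fst (ib_fast M m)) None"
  define n' where "n' = count_list (fst (ib_fast M (Suc m))) None"
  have "n \<le> n'" by (simp add: n_def n'_def ib_fast_Suc Let_def)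
  have "snd (ib_fast M (Suc m)) \<le> 2 * m * (1 + n) + 2 + 2 * n"
    using Suc.IH by (simp add: ib_fast_Suc snd_fast_step n_def Let_def)
  also have "\<dots> = 2 * Suc m * (1 + n)" by simp
  also have "\<dots> \<le> 2 * Suc m * (1 + n')" using \<open>n \<le> n'\<close> by (intro mult_le_mono2) simp
  finally show ?case by (simp add: n'_def)
qed simp

theorem proposition3:
  shows "\<exists>C::nat. \<forall>(M::ncc) (m::nat).
           shyp M > 0 \<and> (\<forall>j. 0 \<le> prior1 M j \<and> prior1 M j \<le> 1) \<longrightarrow>
             fst (ib_fast M m) = ib_preds M m \<and>
             snd (ib_fast M m) \<le> C * m\<^sup>2 \<and>
             (None \<notin> set (ib_preds M m) \<longrightarrow> snd (ib_fast M m) \<le> C * m)"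
proof (intro exI[of _ 4] allI impI conjI)
  fix M :: ncc and m :: nat
  assume "shyp M > 0 \<and> (\<forall>j. 0 \<le> prior1 M j \<and> prior1 M j \<le> 1)"
  then show preds: "fst (ib_fast M m) = ib_preds M m"
    using fst_ib_fast_eq_ib_preds by blast
  have "count_list (fst (ib_fast M m)) None \<le> m"
    using count_le_length length_fst_ib_fast by metis
  then have "2 * m * (1 + count_list (fst (ib_fast M m)) None) \<le> 2 * m * (1 + m)"
    by (intro mult_le_mono2) simp
  with snd_ib_fast_le have "snd (ib_fast M m) \<le> 2 * m * (1 + m)" by (rule le_trans)
  also have "\<dots> \<le> 4 * m\<^sup>2" by (cases m) (simp_all add: power2_eq_square)
  finally show "snd (ib_fast M m) \<le> 4 * m\<^sup>2" .
  show "snd (ib_fast M m) \<le> 4 * m" if "None \<notin> set (ib_preds M m)"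
    using snd_ib_fast_le[of M m] that by (simp add: preds)
qed

end
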